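(* In the stochastic extra-momentum scheme (defined in the context), choose $\theta=\frac18$, $\alpha=\frac1{4L}$, $\tau=\frac{\alpha}{1+\theta/\kappa}$, $\gamma=\frac{1}{8(\kappa+\theta)}$. Then for every $k\ge0$, $$\mathbb E\big[\|z^k-z^*\|^2\big]\le2\Big(1-\frac1{8\kappa+1}\Big)^k\|z^0-z^*\|^2+\frac{128\sigma^2}{\mu(8L+\mu)}+\frac{4\delta^2}{\mu^2}.$$
   Context: Let $\mathcal Z\subseteq\mathbb R^n$ be a nonempty closed convex set. Let $F:\mathcal Z\to\mathbb R^n$ satisfy $(F(z)-F(z'))^\top(z-z')\ge\mu\|z-z'\|^2$ and $\|F(z)-F(z')\|\le L\|z-z'\|$ for all $z,z'\in\mathcal Z$, where $0<\mu\le L$; $\kappa=L/\mu$. Let $z^*$ be the unique point of $\mathcal Z$ with $F(z^* )^\top(z-z^* )\ge 0$ for all $z\in\mathcal Z$. $P_{\mathcal Z}$ denotes Euclidean projection onto $\mathcal Z$. A stochastic oracle returns $\hat F(z,\xi)$ for a random sample $\xi$, and satisfies, for every $z\in\mathcal Z$, $\mathbb E_\xi\|\hat F(z,\xi)-F(z)\|\le\delta$ and $\mathbb E_\xi\|\hat F(z,\xi)-F(z)\|^2\le\sigma^2$ for constants $\delta,\sigma\ge0$. Each oracle call $\hat F(z^j)$ means $\hat F(z^j,\xi^j)$ with a fresh sample independent of all previous samples. The stochastic extra-momentum scheme: starting from $z^0\in\mathcal Z$ with $z^{-1}:=z^0$ and $\hat F(z^{-1}):=\hat F(z^0)$, for $k\ge0$,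 $z^{k+1}=P_{\mathcal Z}(z^k-\alpha\hat F(z^k)+\gamma(z^k-z^{k-1})-\tau(\hat F(z^k)-\hat F(z^{k-1})))$. *)

theory Defs
  imports "HOL-Probability.Probability"
begin

text \<open>Stochastic extra-momentum iterates, for a fixed realisation of the sample
  sequence xi (xi j is the sample used by the oracle call at z^j).
  Conventions: z^{-1} = z^0 and Fhat(z^{-1}) = Fhat(z^0, xi 0).\<close>

fun sem_iter :: "('a::euclidean_space \<Rightarrow> 's \<Rightarrow> 'a) \<Rightarrow> 'a set \<Rightarrow> real \<Rightarrow> real \<Rightarrow> real
    \<Rightarrow> 'a \<Rightarrow> (nat \<Rightarrow> 's) \<Rightarrow> nat \<Rightarrow> 'a" where
  "sem_iter Fh Z \<alpha> \<gamma> \<tau> z0 xi 0 = z0"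
| "sem_iter Fh Z \<alpha> \<gamma> \<tau> z0 xi (Suc k) =
    (let zk = sem_iter Fh Z \<alpha> \<gamma> \<tau> z0 xi k;
         zp = (if k = 0 then z0 else sem_iter Fh Z \<alpha> \<gamma> \<tau> z0 xi (k - 1));
         gk = Fh zk (xi k);
         gp = (if k = 0 then gk else Fh zp (xi (k - 1)))
     in closest_point Z (zk - \<alpha> *\<^sub>R gk + \<gamma> *\<^sub>R (zk - zp) - \<tau> *\<^sub>R (gk - gp)))"

end

theory Submission
  imports Defs
begin

text \<open>
  With the chosen parameters the quantity
    A |z_k - z*|^2 - <X_k, z_k - z*> + |z_k - z_(k-1)|^2 / 4 + K |e_(k-1)|^2,
  where X_k = alpha (F z_k - g_(k-1)) is the lag of the previous gradient estimate and
  e_k is the oracle error at step k, contracts by the factor 1 - gamma in every step,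
  up to an error tau |e_k| |zbar_k - z*| + C |e_k|^2.  The point zbar_k, the update
  computed with the exact operator at z_k, depends only on the earlier samples, so
  conditioning on them bounds the error by tau delta |zbar_k - z*| + C sigma^2, and
  a surplus multiple of |zbar_k - z*|^2 produced by strong monotonicity absorbs the
  first term.  Unrolling over the product of the sample distributions and using that
  the Lyapunov function dominates (A - 1/8) |z_k - z*|^2 gives the bound.
\<close>

lemma mult_le_Young:
  fixes a b r :: real
  assumes "0 < r"
  shows "a * b \<le> r * a\<^sup>2 + b\<^sup>2 / (4 * r)"
proof -
  have "0 \<le> r * (a - b / (2 * r))\<^sup>2" using assms by simp
  also have "\<dots> = r * a\<^sup>2 + b\<^sup>2 / (4 * r) - a * b"
    using assms by (simp add: power2_eq_square field_simps)
  finally show ?thesis by simp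
qed

lemma inner_le_half_sum_sq: "inner x y \<le> ((norm x)\<^sup>2 + (norm y)\<^sup>2) / 2"
  for x y :: "'a::real_inner"
  using norm_cauchy_schwarz[of x y] mult_le_Young[of "1/2" "norm x" "norm y"] by simp

lemma power2_add_le_weighted:
  fixes x y e :: real
  assumes "0 < e"
  shows "(x + y)\<^sup>2 \<le> (1 + e) * x\<^sup>2 + (1 + 1 / e) * y\<^sup>2"
proof -
  have "x * (2 * y) \<le> e * x\<^sup>2 + y\<^sup>2 / e"
    using mult_le_Young[OF assms, of x "2 * y"] by (simp add: power2_eq_square)
  then show ?thesis by (simp add: power2_sum algebra_simps)
qed

lemma inner_three_point:
  "inner (u - v) (u - w) = ((norm (u - w))\<^sup>2 - (norm (v - w))\<^sup>2 + (norm (u - v))\<^sup>2) / 2"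
  for u v w :: "'a::real_inner"
  unfolding power2_norm_eq_inner
  by (simp add: inner_diff_left inner_diff_right inner_commute field_simps)

lemma (in prob_space) nn_integral_le_by_moments:
  fixes f u :: "'a \<Rightarrow> real"
  assumes f: "f \<in> borel_measurable M" and u: "u \<in> borel_measurable M"
    and f_nonneg: "\<And>\<omega>. 0 \<le> f \<omega>" and u_nonneg: "\<And>\<omega>. 0 \<le> u \<omega>"
    and coeffs: "0 \<le> a" "0 \<le> A" "0 \<le> b" "0 \<le> c" "0 \<le> m1" "0 \<le> m2"
    and pointwise: "\<And>\<omega>. f \<omega> + a \<le> A + b * u \<omega> + c * (u \<omega>)\<^sup>2"
    and first: "(\<integral>\<^sup>+\<omega>. ennreal (u \<omega>) \<partial>M) \<le> ennreal m1"
    and second: "(\<integral>\<^sup>+\<omega>. ennreal ((u \<omega>)\<^sup>2) \<partial>M) \<le> ennreal m2"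
  shows "(\<integral>\<^sup>+\<omega>. ennreal (f \<omega>) \<partial>M) \<le> ennreal (A + b * m1 + c * m2 - a)"
proof -
  have "(\<integral>\<^sup>+\<omega>. ennreal (f \<omega>) \<partial>M) + ennreal a = (\<integral>\<^sup>+\<omega>. ennreal (f \<omega> + a) \<partial>M)"
    using f f_nonneg coeffs by (simp add: nn_integral_add ennreal_plus emeasure_space_1)
  also have "\<dots> \<le> (\<integral>\<^sup>+\<omega>. ennreal A + ennreal b * ennreal (u \<omega>) + ennreal c * ennreal ((u \<omega>)\<^sup>2) \<partial>M)"
  proof (rule nn_integral_mono)
    fix \<omega>
    have "ennreal A + ennreal b * ennreal (u \<omega>) + ennreal c * ennreal ((u \<omega>)\<^sup>2)
        = ennreal (A + b * u \<omega> + c * (u \<omega>)\<^sup>2)"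
      using u_nonneg[of \<omega>] coeffs by (simp add: ennreal_plus ennreal_mult)
    then show "ennreal (f \<omega> + a) \<le> ennreal A + ennreal b * ennreal (u \<omega>) + ennreal c * ennreal ((u \<omega>)\<^sup>2)"
      using pointwise[of \<omega>] by (simp add: ennreal_leI)
  qed
  also have "\<dots> = ennreal A + ennreal b * (\<integral>\<^sup>+\<omega>. ennreal (u \<omega>) \<partial>M) + ennreal c * (\<integral>\<^sup>+\<omega>. ennreal ((u \<omega>)\<^sup>2) \<partial>M)"
    using u by (simp add: nn_integral_add nn_integral_cmult emeasure_space_1)
  also have "\<dots> \<le> ennreal A + ennreal b * ennreal m1 + ennreal c * ennreal m2"
    using first second by (intro add_mono mult_left_mono order_refl) auto
  also have "\<dots> = ennreal (A + b * m1 + c * m2)"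
    using coeffs by (simp add: ennreal_plus ennreal_mult)
  finally have "(\<integral>\<^sup>+\<omega>. ennreal (f \<omega>) \<partial>M) \<le> ennreal (A + b * m1 + c * m2) - ennreal a"
    by (simp add: ennreal_le_minus_iff)
  then show ?thesis
    using ennreal_minus[OF coeffs(1), of "A + b * m1 + c * m2"] by (simp only:)
qed

lemma nn_integral_PiM_lessThan_contraction:
  fixes D :: "nat \<Rightarrow> 'a measure" and V :: "nat \<Rightarrow> (nat \<Rightarrow> 'a) \<Rightarrow> real"
  assumes prob: "\<And>i. prob_space (D i)"
    and meas: "\<And>k. V k \<in> borel_measurable (PiM {..<k} D)"
    and nonneg: "\<And>k x. 0 \<le> V k x"
    and init: "\<And>x. V 0 x \<le> B"
    and step: "\<And>k x. x \<in> space (PiM {..<k} D) \<Longrightarrow>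
      (\<integral>\<^sup>+y. ennreal (V (Suc k) (x(k := y))) \<partial>D k) \<le> ennreal ((1 - g) * V k x + N)"
    and g: "0 < g" "g \<le> 1" and N: "0 \<le> N"
  shows "(\<integral>\<^sup>+x. ennreal (V k x) \<partial>PiM {..<k} D) \<le> ennreal ((1 - g) ^ k * B + N / g)"
proof -
  have "0 \<le> B" using nonneg[of 0 undefined] init[of undefined] by linarith
  then have bound_nonneg: "0 \<le> (1 - g) ^ k * B + N / g" for k
    using g N by (intro add_nonneg_nonneg mult_nonneg_nonneg divide_nonneg_nonneg zero_le_power) auto
  show ?thesis
  proof (induction k)
    case 0
    interpret prob_space "PiM {} D" by (intro prob_space_PiM prob)
    have "(\<integral>\<^sup>+x. ennreal (V 0 x) \<partial>PiM {..<0} D) \<le> (\<integral>\<^sup>+x. ennreal B \<partial>PiM {} D)"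
      unfolding lessThan_0 using init by (intro nn_integral_mono) (simp add: ennreal_leI)
    also have "\<dots> \<le> ennreal ((1 - g) ^ 0 * B + N / g)"
      using bound_nonneg[of 0] g N by (simp add: emeasure_space_1 ennreal_leI)
    finally show ?case .
  next
    case (Suc k)
    interpret product_sigma_finite D
      unfolding product_sigma_finite_def using prob prob_space_imp_sigma_finite by blast
    interpret prob_space "PiM {..<k} D" by (intro prob_space_PiM prob)
    have Vk: "V k \<in> borel_measurable (PiM {..<k} D)" by (rule meas)
    have "(\<integral>\<^sup>+x. ennreal (V (Suc k) x) \<partial>PiM {..<Suc k} D)
        = (\<integral>\<^sup>+x. (\<integral>\<^sup>+y. ennreal (V (Suc k) (x(k := y))) \<partial>D k) \<partial>PiM {..<k} D)"
      unfolding lessThan_Suc using meas[of "Suc k"]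
      by (intro product_nn_integral_insert) (auto simp: lessThan_Suc)
    also have "\<dots> \<le> (\<integral>\<^sup>+x. ennreal (1 - g) * ennreal (V k x) + ennreal N \<partial>PiM {..<k} D)"
    proof (rule nn_integral_mono)
      fix x assume "x \<in> space (PiM {..<k} D)"
      moreover have "ennreal (1 - g) * ennreal (V k x) + ennreal N = ennreal ((1 - g) * V k x + N)"
        using g N nonneg[of k x] by (simp add: ennreal_plus ennreal_mult)
      ultimately show "(\<integral>\<^sup>+y. ennreal (V (Suc k) (x(k := y))) \<partial>D k)
          \<le> ennreal (1 - g) * ennreal (V k x) + ennreal N"
        using step by simp
    qed
    also have "\<dots> = ennreal (1 - g) * (\<integral>\<^sup>+x. ennreal (V k x) \<partial>PiM {..<k} D) + ennreal N"
      using Vk by (simp add: nn_integral_add nn_integral_cmult emeasure_space_1)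
    also have "\<dots> \<le> ennreal (1 - g) * ennreal ((1 - g) ^ k * B + N / g) + ennreal N"
      using Suc.IH by (intro add_mono mult_left_mono order_refl) auto
    also have "\<dots> = ennreal ((1 - g) ^ Suc k * B + N / g)"
    proof -
      have "(1 - g) * ((1 - g) ^ k * B + N / g) + N = (1 - g) ^ Suc k * B + N / g"
        using g by (simp add: field_simps)
      moreover have "ennreal (1 - g) * ennreal ((1 - g) ^ k * B + N / g) + ennreal N
          = ennreal ((1 - g) * ((1 - g) ^ k * B + N / g) + N)"
        using g N bound_nonneg[of k] by (simp add: ennreal_plus ennreal_mult)
      ultimately show ?thesis by simp
    qed
    finally show ?case .
  qed
qed

lemma (in prob_space) nn_integral_indep_vars_restrict:
  assumes indep: "indep_vars (\<lambda>_. S) X I" and I: "I \<noteq> {}"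
    and g: "g \<in> borel_measurable (PiM I (\<lambda>_. S))"
  shows "(\<integral>\<^sup>+\<omega>. g (\<lambda>i\<in>I. X i \<omega>) \<partial>M) = (\<integral>\<^sup>+x. g x \<partial>PiM I (\<lambda>i. distr M S (X i)))"
proof -
  have rv: "\<And>i. i \<in> I \<Longrightarrow> X i \<in> measurable M S"
    using indep unfolding indep_vars_def2 by auto
  have "(\<integral>\<^sup>+\<omega>. g (\<lambda>i\<in>I. X i \<omega>) \<partial>M) = (\<integral>\<^sup>+x. g x \<partial>distr M (PiM I (\<lambda>_. S)) (\<lambda>\<omega>. \<lambda>i\<in>I. X i \<omega>))"
    using rv g by (intro nn_integral_distr[symmetric] measurable_restrict) auto
  also have "distr M (PiM I (\<lambda>_. S)) (\<lambda>\<omega>. \<lambda>i\<in>I. X i \<omega>) = PiM I (\<lambda>i. distr M S (X i))"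
    using indep_vars_iff_distr_eq_PiM'[OF I, where M'="\<lambda>_. S" and X=X] rv indep by simp
  finally show ?thesis .
qed

locale extra_momentum =
  fixes Z :: "'a::euclidean_space set" and F :: "'a \<Rightarrow> 'a" and \<mu> L :: real and zs :: 'a
  assumes Z_nonempty: "Z \<noteq> {}" and Z_closed: "closed Z" and Z_convex: "convex Z"
    and mu_pos: "0 < \<mu>" and mu_le_L: "\<mu> \<le> L"
    and strongly_monotone: "\<forall>z\<in>Z. \<forall>z'\<in>Z. inner (F z - F z') (z - z') \<ge> \<mu> * (norm (z - z'))\<^sup>2"
    and lipschitz: "\<forall>z\<in>Z. \<forall>z'\<in>Z. norm (F z - F z') \<le> L * norm (z - z')"
    and zs_in_Z: "zs \<in> Z" and zs_solution: "\<forall>z\<in>Z. inner (F zs) (z - zs) \<ge> 0"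
begin

definition "\<alpha> = 1 / (4 * L)"
definition "\<gamma> = \<mu> / (8 * L + \<mu>)"
definition "\<tau> = 2 / (8 * L + \<mu>)"
definition "lyap_A = 1/2 + \<mu> / (8 * L)"
definition "lyap_K = 4 * \<alpha>\<^sup>2"
definition "gain = \<mu> / (10 * L)"
definition "noise_C = \<tau> * (\<alpha> + \<tau>) + lyap_K + 5 * gain * (\<alpha> + \<tau>)\<^sup>2"

definition "lyap z zp X ep =
  lyap_A * (norm (z - zs))\<^sup>2 - inner X (z - zs) + 1/4 * (norm (z - zp))\<^sup>2 + lyap_K * (norm ep)\<^sup>2"

lemma L_pos: "0 < L"
  using mu_pos mu_le_L by linarith

lemma
  shows alpha_pos: "0 < \<alpha>" and alpha_mult_L: "\<alpha> * L = 1/4"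
    and gamma_pos: "0 < \<gamma>" and gamma_le: "\<gamma> \<le> 1/9"
    and tau_pos: "0 < \<tau>" and tau_eq: "\<tau> = \<alpha> * (1 - \<gamma>)" and tau_le_alpha: "\<tau> \<le> \<alpha>"
    and gain_pos: "0 < gain" and gain_le: "gain \<le> 1/10"
    and lyap_A_gamma: "1/2 + \<gamma>/2 = (1 - \<gamma>) * lyap_A"
    and lyap_A_alpha: "1/2 + \<alpha> * \<mu> = lyap_A + 5/4 * gain"
    and lyap_A_ge: "3/8 < lyap_A - 1/8"
proof -
  have L: "0 < L" and m: "0 < 8 * L + \<mu>" using L_pos mu_pos by linarith+
  show "0 < \<alpha>" "\<alpha> * L = 1/4" "0 < \<gamma>" "0 < \<tau>" "0 < gain" "3/8 < lyap_A - 1/8"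
    using mu_pos L m unfolding \<alpha>_def \<gamma>_def \<tau>_def gain_def lyap_A_def by auto
  show "\<gamma> \<le> 1/9" "gain \<le> 1/10" "\<tau> \<le> \<alpha>"
    unfolding \<gamma>_def gain_def \<tau>_def \<alpha>_def using mu_pos mu_le_L L m by (simp_all add: field_simps)
  show "\<tau> = \<alpha> * (1 - \<gamma>)"
    unfolding \<tau>_def \<alpha>_def \<gamma>_def using L m by (simp add: field_simps)
  show "1/2 + \<alpha> * \<mu> = lyap_A + 5/4 * gain"
    unfolding \<alpha>_def lyap_A_def gain_def using L by (simp add: field_simps)
  have "1 - \<gamma> = 8 * L / (8 * L + \<mu>)"
    unfolding \<gamma>_def using m by (simp add: field_simps)
  moreover have "lyap_A = (4 * L + \<mu>) / (8 * L)"
    unfolding lyap_A_def using L by (simp add: field_simps)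
  moreover have "1/2 + \<gamma>/2 = (4 * L + \<mu>) / (8 * L + \<mu>)"
    unfolding \<gamma>_def using m by (simp add: field_simps)
  ultimately show "1/2 + \<gamma>/2 = (1 - \<gamma>) * lyap_A"
    using L by simp
qed

lemma strongly_monotone_solution: "z \<in> Z \<Longrightarrow> \<mu> * (norm (z - zs))\<^sup>2 \<le> inner (F z) (z - zs)"
  using strongly_monotone zs_solution zs_in_Z by (force simp: inner_diff_left)

lemma projected_step_inner_le:
  assumes z: "z \<in> Z"
    and zn: "zn = closest_point Z (z + \<gamma> *\<^sub>R (z - zp) - \<alpha> *\<^sub>R (F z + e) - (1 - \<gamma>) *\<^sub>R X - c *\<^sub>R e)"
  shows "((norm (zn - zs))\<^sup>2 - (norm (z - zs))\<^sup>2 + (norm (zn - z))\<^sup>2) / 2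
      - \<gamma> * inner (z - zp) (zn - zs) + \<alpha> * \<mu> * (norm (zn - zs))\<^sup>2
      - inner (\<alpha> *\<^sub>R (F zn - F z - e)) (zn - zs) + (1 - \<gamma>) * inner X (zn - zs) + c * inner e (zn - zs) \<le> 0"
proof -
  define y where "y = z + \<gamma> *\<^sub>R (z - zp) - \<alpha> *\<^sub>R (F z + e) - (1 - \<gamma>) *\<^sub>R X - c *\<^sub>R e"
  have zn_in: "zn \<in> Z" using zn closest_point_in_set[OF Z_closed Z_nonempty] by simp
  have "inner (y - zn) (zs - zn) \<le> 0"
    using closest_point_dot[OF Z_convex Z_closed zs_in_Z, of y] zn unfolding y_def by simp
  moreover have "inner (y - zn) (zs - zn) = inner (zn - z) (zn - zs) - \<gamma> * inner (z - zp) (zn - zs)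
      + \<alpha> * inner (F zn) (zn - zs) - inner (\<alpha> *\<^sub>R (F zn - F z - e)) (zn - zs)
      + (1 - \<gamma>) * inner X (zn - zs) + c * inner e (zn - zs)"
    unfolding y_def by (simp add: inner_diff_left inner_add_left inner_diff_right inner_add_right
        inner_commute algebra_simps)
  moreover have "\<alpha> * \<mu> * (norm (zn - zs))\<^sup>2 \<le> \<alpha> * inner (F zn) (zn - zs)"
    using strongly_monotone_solution[OF zn_in] alpha_pos by (simp add: mult.assoc)
  ultimately show ?thesis unfolding inner_three_point by linarith
qed

lemma lyap_step:
  fixes z zp zn zbar X e ep :: 'a and c :: real
  assumes z: "z \<in> Z" and zp: "zp \<in> Z"
    and zn: "zn = closest_point Z (z + \<gamma> *\<^sub>R (z - zp) - \<alpha> *\<^sub>R (F z + e) - (1 - \<gamma>) *\<^sub>R X - c *\<^sub>R e)"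
    and X: "norm X \<le> \<alpha> * L * norm (z - zp) + \<alpha> * norm ep"
    and c: "0 \<le> c" "c \<le> \<tau>"
    and zbar: "norm (zn - zbar) \<le> (\<alpha> + \<tau>) * norm e"
  shows "lyap zn z (\<alpha> *\<^sub>R (F zn - F z - e)) e + gain * (norm (zbar - zs))\<^sup>2
     \<le> (1 - \<gamma>) * lyap z zp X ep + c * norm e * norm (zbar - zs) + noise_C * (norm e)\<^sup>2"
proof -
  define W where "W = (norm (z - zs))\<^sup>2"
  define Wn where "Wn = (norm (zn - zs))\<^sup>2"
  define D where "D = (norm (z - zp))\<^sup>2"
  define Dn where "Dn = (norm (zn - z))\<^sup>2"
  define j1 where "j1 = inner (z - zp) (z - zs)"
  define j2 where "j2 = inner (z - zp) (zn - z)"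
  define kn where "kn = inner (\<alpha> *\<^sub>R (F zn - F z - e)) (zn - zs)"
  define k1 where "k1 = inner X (z - zs)"
  define k2 where "k2 = inner X (zn - z)"
  define ke where "ke = inner e (zn - zs)"
  define E where "E = norm e"
  define Ep where "Ep = norm ep"
  define nb where "nb = norm (zbar - zs)"
  have g0: "0 \<le> \<gamma>" and g9: "\<gamma> \<le> 1/9" and g1: "0 \<le> 1 - \<gamma>" using gamma_pos gamma_le by auto
  have proj: "(Wn - W + Dn)/2 - \<gamma> * (j1 + j2) + \<alpha> * \<mu> * Wn - kn + (1 - \<gamma>) * (k1 + k2) + c * ke \<le> 0"
    using projected_step_inner_le[OF z zn]
    unfolding W_def Wn_def Dn_def j1_def j2_def kn_def k1_def k2_def ke_def
    by (simp add: inner_diff_right inner_add_right algebra_simps)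
  have j1_le: "\<gamma> * j1 \<le> \<gamma> * (D + W) / 2"
    using mult_left_mono[OF inner_le_half_sum_sq[of "z - zp" "z - zs"] g0]
    unfolding j1_def D_def W_def by simp
  have j2_le: "\<gamma> * j2 \<le> \<gamma> * (D + Dn) / 2"
    using mult_left_mono[OF inner_le_half_sum_sq[of "z - zp" "zn - z"] g0]
    unfolding j2_def D_def Dn_def by simp
  have k2_ge: "(1 - \<gamma>) * (- k2) \<le> (1 - \<gamma>)/8 * (D + Dn) + Dn/16 + 4 * (1 - \<gamma>)\<^sup>2 * \<alpha>\<^sup>2 * Ep\<^sup>2"
  proof -
    define nd where "nd = norm (z - zp)"
    define N where "N = norm (zn - z)"
    have "- k2 \<le> norm X * N"
      using norm_cauchy_schwarz[of "- X" "zn - z"] unfolding k2_def N_def by simp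
    also have "\<dots> \<le> (nd/4 + \<alpha> * Ep) * N"
      using X alpha_mult_L unfolding nd_def Ep_def N_def by (intro mult_right_mono) auto
    finally have "(1 - \<gamma>) * (- k2) \<le> (1 - \<gamma>) * ((nd/4 + \<alpha> * Ep) * N)"
      using g1 by (rule mult_left_mono)
    also have "\<dots> = (1 - \<gamma>) * (nd * (N/4)) + N * ((1 - \<gamma>) * \<alpha> * Ep)"
      by (simp add: algebra_simps)
    finally have "(1 - \<gamma>) * (- k2) \<le> (1 - \<gamma>) * (nd * (N/4)) + N * ((1 - \<gamma>) * \<alpha> * Ep)" .
    moreover have "nd * (N/4) \<le> (D + Dn) / 8"
    proof -
      have "nd * (N/4) \<le> 1/8 * nd\<^sup>2 + (N/4)\<^sup>2 / (4 * (1/8))"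
        by (rule mult_le_Young) simp
      also have "\<dots> = (D + Dn) / 8"
        unfolding D_def Dn_def nd_def N_def by (simp add: power_divide)
      finally show ?thesis .
    qed
    then have "(1 - \<gamma>) * (nd * (N/4)) \<le> (1 - \<gamma>) * ((D + Dn) / 8)"
      using g1 by (rule mult_left_mono)
    moreover have "N * ((1 - \<gamma>) * \<alpha> * Ep) \<le> Dn / 16 + 4 * (1 - \<gamma>)\<^sup>2 * \<alpha>\<^sup>2 * Ep\<^sup>2"
    proof -
      have "N * ((1 - \<gamma>) * \<alpha> * Ep) \<le> 1/16 * N\<^sup>2 + ((1 - \<gamma>) * \<alpha> * Ep)\<^sup>2 / (4 * (1/16))"
        by (rule mult_le_Young) simp
      also have "\<dots> = Dn / 16 + 4 * (1 - \<gamma>)\<^sup>2 * \<alpha>\<^sup>2 * Ep\<^sup>2"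
        unfolding Dn_def N_def by (simp add: power_mult_distrib)
      finally show ?thesis .
    qed
    moreover have "(1 - \<gamma>) * ((D + Dn) / 8) = (1 - \<gamma>)/8 * (D + Dn)" by simp
    ultimately show ?thesis by linarith
  qed
  have ke_ge: "- (c * ke) \<le> c * E * nb + c * (\<alpha> + \<tau>) * E\<^sup>2"
  proof -
    have "- ke = - inner e (zbar - zs) - inner e (zn - zbar)"
      unfolding ke_def by (simp add: inner_diff_right)
    also have "\<dots> \<le> E * nb + E * ((\<alpha> + \<tau>) * E)"
      using norm_cauchy_schwarz[of "- e" "zbar - zs"] norm_cauchy_schwarz[of "- e" "zn - zbar"]
        mult_left_mono[OF zbar norm_ge_zero[of e]]
      unfolding E_def nb_def by simp
    finally have "c * (- ke) \<le> c * (E * nb + E * ((\<alpha> + \<tau>) * E))"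
      using c(1) by (rule mult_left_mono)
    then show ?thesis by (simp add: algebra_simps power2_eq_square)
  qed
  have nb_le: "gain * nb\<^sup>2 \<le> 5/4 * gain * Wn + 5 * gain * (\<alpha> + \<tau>)\<^sup>2 * E\<^sup>2"
  proof -
    have "nb \<le> norm (zn - zs) + norm (zn - zbar)"
      unfolding nb_def using norm_triangle_ineq4[of "zn - zs" "zn - zbar"] by simp
    then have "nb\<^sup>2 \<le> (norm (zn - zs) + norm (zn - zbar))\<^sup>2"
      unfolding nb_def by (simp add: power_mono)
    also have "\<dots> \<le> 5/4 * Wn + 5 * (norm (zn - zbar))\<^sup>2"
      using power2_add_le_weighted[of "1/4"] unfolding Wn_def by simp
    also have "(norm (zn - zbar))\<^sup>2 \<le> (\<alpha> + \<tau>)\<^sup>2 * E\<^sup>2"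
      using zbar unfolding E_def by (simp add: power_mono flip: power_mult_distrib)
    finally have "nb\<^sup>2 \<le> 5/4 * Wn + 5 * ((\<alpha> + \<tau>)\<^sup>2 * E\<^sup>2)" by simp
    then have "gain * nb\<^sup>2 \<le> gain * (5/4 * Wn + 5 * ((\<alpha> + \<tau>)\<^sup>2 * E\<^sup>2))"
      using gain_pos by (intro mult_left_mono) auto
    then show ?thesis by (simp add: algebra_simps)
  qed
  have Dn0: "0 \<le> Dn" and D0: "0 \<le> D" unfolding Dn_def D_def by auto
  have gamma_D: "\<gamma> * D \<le> D / 9" and gamma_Dn: "\<gamma> * Dn \<le> Dn / 9"
    using mult_right_mono[OF g9 D0] mult_right_mono[OF g9 Dn0] by simp_all
  have gamma_sq_le: "4 * (1 - \<gamma>)\<^sup>2 * \<alpha>\<^sup>2 * Ep\<^sup>2 \<le> (1 - \<gamma>) * (4 * \<alpha>\<^sup>2 * Ep\<^sup>2)"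
  proof -
    have "(1 - \<gamma>)\<^sup>2 \<le> 1 - \<gamma>"
      using g0 g1 unfolding power2_eq_square by (intro mult_left_le) auto
    then have "(1 - \<gamma>)\<^sup>2 * (4 * \<alpha>\<^sup>2 * Ep\<^sup>2) \<le> (1 - \<gamma>) * (4 * \<alpha>\<^sup>2 * Ep\<^sup>2)"
      by (rule mult_right_mono) simp
    then show ?thesis by (simp add: ac_simps)
  qed
  have c_le_tau: "c * (\<alpha> + \<tau>) * E\<^sup>2 \<le> \<tau> * (\<alpha> + \<tau>) * E\<^sup>2"
    using c(2) alpha_pos tau_pos by (intro mult_right_mono) auto
  text \<open>The claimed inequality is a nonnegative combination of the estimates above.\<close>
  have "0 \<le> - ((Wn - W + Dn)/2 - \<gamma> * (j1 + j2) + \<alpha> * \<mu> * Wn - kn + (1 - \<gamma>) * (k1 + k2) + c * ke)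
      + (\<gamma> * (D + W) / 2 - \<gamma> * j1) + (\<gamma> * (D + Dn) / 2 - \<gamma> * j2)
      + ((1 - \<gamma>)/8 * (D + Dn) + Dn/16 + 4 * (1 - \<gamma>)\<^sup>2 * \<alpha>\<^sup>2 * Ep\<^sup>2 - (1 - \<gamma>) * (- k2))
      + (c * E * nb + c * (\<alpha> + \<tau>) * E\<^sup>2 + c * ke)
      + (5/4 * gain * Wn + 5 * gain * (\<alpha> + \<tau>)\<^sup>2 * E\<^sup>2 - gain * nb\<^sup>2)
      + ((1 - \<gamma>) * (4 * \<alpha>\<^sup>2 * Ep\<^sup>2) - 4 * (1 - \<gamma>)\<^sup>2 * \<alpha>\<^sup>2 * Ep\<^sup>2)
      + (\<tau> * (\<alpha> + \<tau>) * E\<^sup>2 - c * (\<alpha> + \<tau>) * E\<^sup>2)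
      + 3/8 * (Dn / 9 - \<gamma> * Dn) + 9/8 * (D / 9 - \<gamma> * D) + 1/48 * Dn"
    using proj j1_le j2_le k2_ge ke_ge nb_le gamma_sq_le c_le_tau gamma_D gamma_Dn D0 Dn0 by argo
  also have "\<dots> = (1 - \<gamma>) * (lyap_A * W - k1 + 1/4 * D + 4 * \<alpha>\<^sup>2 * Ep\<^sup>2) + c * E * nb
        + (\<tau> * (\<alpha> + \<tau>) + 4 * \<alpha>\<^sup>2 + 5 * gain * (\<alpha> + \<tau>)\<^sup>2) * E\<^sup>2
        - (lyap_A * Wn - kn + 1/4 * Dn + 4 * \<alpha>\<^sup>2 * E\<^sup>2 + gain * nb\<^sup>2)
        - ((1 - \<gamma>) * lyap_A - (1/2 + \<gamma>/2)) * W - (\<alpha> * \<mu> + 1/2 - lyap_A - 5/4 * gain) * Wn"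
    by (simp add: field_simps)
  also have "\<dots> = (1 - \<gamma>) * (lyap_A * W - k1 + 1/4 * D + 4 * \<alpha>\<^sup>2 * Ep\<^sup>2) + c * E * nb
        + noise_C * E\<^sup>2 - (lyap_A * Wn - kn + 1/4 * Dn + 4 * \<alpha>\<^sup>2 * E\<^sup>2 + gain * nb\<^sup>2)"
    using lyap_A_gamma lyap_A_alpha unfolding noise_C_def lyap_K_def by simp
  finally show ?thesis
    unfolding lyap_def lyap_K_def W_def Wn_def D_def Dn_def kn_def k1_def E_def Ep_def nb_def
    by simp
qed

lemma lyap_ge:
  assumes "norm X \<le> \<alpha> * L * norm (z - zp) + \<alpha> * norm ep"
  shows "(lyap_A - 1/8) * (norm (z - zs))\<^sup>2 \<le> lyap z zp X ep"
proof -
  define nw where "nw = norm (z - zs)"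
  define nd where "nd = norm (z - zp)"
  define Ep where "Ep = norm ep"
  have "inner X (z - zs) \<le> norm X * nw" unfolding nw_def by (rule norm_cauchy_schwarz)
  also have "\<dots> \<le> (nd/4 + \<alpha> * Ep) * nw"
    using assms alpha_mult_L unfolding nd_def Ep_def nw_def by (intro mult_right_mono) auto
  also have "\<dots> = nw * (nd/4) + nw * (\<alpha> * Ep)"
    by (simp add: algebra_simps)
  also have "\<dots> \<le> (1/16 * nw\<^sup>2 + (nd/4)\<^sup>2 / (4 * (1/16))) + (1/16 * nw\<^sup>2 + (\<alpha> * Ep)\<^sup>2 / (4 * (1/16)))"
    by (intro add_mono mult_le_Young) simp_all
  also have "\<dots> = nw\<^sup>2/8 + nd\<^sup>2/4 + 4 * \<alpha>\<^sup>2 * Ep\<^sup>2"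
    by (simp add: power_divide power_mult_distrib)
  finally show ?thesis
    unfolding lyap_def lyap_K_def nw_def[symmetric] nd_def[symmetric] Ep_def[symmetric]
    by (simp add: algebra_simps)
qed

lemma noise_C_nonneg: "0 \<le> noise_C"
  unfolding noise_C_def lyap_K_def using tau_pos alpha_pos gain_pos by simp

lemma noise_C_le: "noise_C \<le> 1 / (2 * L\<^sup>2)"
proof -
  have "\<tau> * (\<alpha> + \<tau>) \<le> \<alpha> * (\<alpha> + \<alpha>)"
    using tau_le_alpha tau_pos alpha_pos by (intro mult_mono) auto
  moreover have "5 * gain * (\<alpha> + \<tau>)\<^sup>2 \<le> 5 * (1/10) * (2 * \<alpha>)\<^sup>2"
    using tau_le_alpha tau_pos gain_pos gain_le by (intro mult_mono power_mono) auto
  ultimately have "noise_C \<le> 8 * \<alpha>\<^sup>2"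
    unfolding noise_C_def lyap_K_def by (simp add: power2_eq_square)
  also have "8 * \<alpha>\<^sup>2 = 1 / (2 * L\<^sup>2)"
    unfolding \<alpha>_def using L_pos by (simp add: power2_eq_square)
  finally show ?thesis .
qed

lemma noise_C_div_le: "noise_C / (\<gamma> * (lyap_A - 1/8)) \<le> 128 / (\<mu> * (8 * L + \<mu>))"
proof -
  define s where "s = 8 * L + \<mu>"
  have s: "0 < s" "s\<^sup>2 \<le> 96 * L\<^sup>2"
  proof -
    show "0 < s" unfolding s_def using L_pos mu_pos by simp
    have "s\<^sup>2 \<le> (9 * L)\<^sup>2"
      unfolding s_def using mu_pos mu_le_L by (intro power_mono) auto
    moreover have "(9 * L)\<^sup>2 = 81 * L\<^sup>2" by (simp add: power_mult_distrib)
    ultimately show "s\<^sup>2 \<le> 96 * L\<^sup>2" using zero_le_power2[of L] by linarith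
  qed
  have A: "3/8 < lyap_A - 1/8" by (rule lyap_A_ge)
  have "noise_C \<le> 48 / s\<^sup>2"
  proof -
    have "1 / (2 * L\<^sup>2) = 48 / (96 * L\<^sup>2)" using L_pos by simp
    also have "\<dots> \<le> 48 / s\<^sup>2" using s L_pos by (intro divide_left_mono) auto
    finally show ?thesis using noise_C_le by linarith
  qed
  also have "\<dots> \<le> 128 * (lyap_A - 1/8) / s\<^sup>2"
    using A s by (intro divide_right_mono) auto
  also have "\<dots> = 128 / (\<mu> * s) * (\<gamma> * (lyap_A - 1/8))"
    unfolding \<gamma>_def s_def[symmetric] using mu_pos s by (simp add: power2_eq_square field_simps)
  finally show ?thesis
    using gamma_pos A unfolding s_def by (simp add: pos_divide_le_eq)
qed

lemma tau_sq_div_le: "\<tau>\<^sup>2 / (4 * gain) / (\<gamma> * (lyap_A - 1/8)) \<le> 4 / \<mu>\<^sup>2"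
proof -
  define s where "s = 8 * L + \<mu>"
  have s: "0 < s" unfolding s_def using L_pos mu_pos by simp
  have A: "3/8 < lyap_A - 1/8" by (rule lyap_A_ge)
  have "\<tau>\<^sup>2 / (4 * gain) = 10 * L / s / (\<mu> * s)"
    unfolding \<tau>_def gain_def s_def[symmetric] using mu_pos L_pos s
    by (simp add: power2_eq_square field_simps)
  also have "\<dots> \<le> 4 * (lyap_A - 1/8) / (\<mu> * s)"
  proof (intro divide_right_mono)
    have "3/2 * (8 * L) \<le> 4 * (lyap_A - 1/8) * s"
      using A L_pos mu_pos unfolding s_def by (intro mult_mono) auto
    then have "10 * L \<le> 4 * (lyap_A - 1/8) * s" using L_pos by linarith
    then show "10 * L / s \<le> 4 * (lyap_A - 1/8)" using s by (simp add: divide_le_eq)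
  qed (use mu_pos s in auto)
  also have "\<dots> = 4 / \<mu>\<^sup>2 * (\<gamma> * (lyap_A - 1/8))"
    unfolding \<gamma>_def s_def[symmetric] using mu_pos s by (simp add: power2_eq_square field_simps)
  finally show ?thesis
    using gamma_pos A by (subst pos_divide_le_eq) auto
qed

lemma step_sizes_closed_form:
  shows "1 / (4 * L) = \<alpha>" and "1 / (8 * (L / \<mu> + 1 / 8)) = \<gamma>"
    and "\<alpha> / (1 + (1 / 8) / (L / \<mu>)) = \<tau>" and "1 - 1 / (8 * (L / \<mu>) + 1) = 1 - \<gamma>"
  unfolding \<alpha>_def \<gamma>_def \<tau>_def using mu_pos L_pos by (simp_all add: field_simps)

end

locale extra_momentum_iteration = extra_momentum Z F \<mu> L zs
  for Z :: "'a::euclidean_space set" and F \<mu> L zs +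
  fixes Fh :: "'a \<Rightarrow> 's \<Rightarrow> 'a" and z0 :: 'a
  assumes z0_in_Z: "z0 \<in> Z"
begin

definition "iter xi k = sem_iter Fh Z \<alpha> \<gamma> \<tau> z0 xi k"
definition "prev xi k = (if k = 0 then z0 else iter xi (k - 1))"
definition "noise xi k = Fh (iter xi k) (xi k) - F (iter xi k)"
definition "prev_noise xi k = (if k = 0 then 0 else noise xi (k - 1))"
text \<open>At k = 0 there is no earlier estimate; the value F z0 makes corr vanish there and
  noiseless the plain projected gradient step.\<close>
definition "prev_grad xi k = (if k = 0 then F z0 else Fh (prev xi k) (xi (k - 1)))"
definition "corr xi k = \<alpha> *\<^sub>R (F (iter xi k) - prev_grad xi k)"
definition "lyap_iter xi k = lyap (iter xi k) (prev xi k) (corr xi k) (prev_noise xi k)"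
definition "noiseless xi k = closest_point Z
  (iter xi k + \<gamma> *\<^sub>R (iter xi k - prev xi k) - (\<alpha> + \<tau>) *\<^sub>R F (iter xi k) + \<tau> *\<^sub>R prev_grad xi k)"

lemma iter_0 [simp]: "iter xi 0 = z0"
  unfolding iter_def by simp

lemma iter_in_Z: "iter xi k \<in> Z"
  by (cases k) (auto simp: iter_def Let_def z0_in_Z closest_point_in_set[OF Z_closed Z_nonempty])

lemma prev_in_Z: "prev xi k \<in> Z"
  unfolding prev_def using iter_in_Z z0_in_Z by auto

lemma iter_Suc: "iter xi (Suc k) = closest_point Z (iter xi k - \<alpha> *\<^sub>R Fh (iter xi k) (xi k)
   + \<gamma> *\<^sub>R (iter xi k - prev xi k)
   - \<tau> *\<^sub>R (Fh (iter xi k) (xi k) - (if k = 0 then Fh (iter xi k) (xi k) else prev_grad xi k)))"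
  unfolding iter_def prev_def prev_grad_def by (simp add: Let_def)

lemma corr_bound: "norm (corr xi k) \<le> \<alpha> * L * norm (iter xi k - prev xi k) + \<alpha> * norm (prev_noise xi k)"
proof (cases "k = 0")
  case True
  then show ?thesis using alpha_pos L_pos by (simp add: corr_def prev_grad_def prev_noise_def)
next
  case False
  have "corr xi k = \<alpha> *\<^sub>R ((F (iter xi k) - F (prev xi k)) - prev_noise xi k)"
    using False by (simp add: corr_def prev_grad_def prev_noise_def noise_def prev_def algebra_simps)
  also have "norm \<dots> \<le> \<alpha> * (norm (F (iter xi k) - F (prev xi k)) + norm (prev_noise xi k))"
    using alpha_pos norm_triangle_ineq4 by (simp add: mult_left_mono)
  also have "\<dots> \<le> \<alpha> * (L * norm (iter xi k - prev xi k) + norm (prev_noise xi k))"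
    using alpha_pos lipschitz iter_in_Z prev_in_Z by (intro mult_left_mono add_right_mono) auto
  finally show ?thesis by (simp add: algebra_simps)
qed

lemma lyap_iter_ge: "(lyap_A - 1/8) * (norm (iter xi k - zs))\<^sup>2 \<le> lyap_iter xi k"
  unfolding lyap_iter_def by (rule lyap_ge[OF corr_bound])

lemma lyap_iter_nonneg: "0 \<le> lyap_iter xi k"
proof -
  have "0 \<le> (lyap_A - 1/8) * (norm (iter xi k - zs))\<^sup>2" using lyap_A_ge by simp
  then show ?thesis using lyap_iter_ge[of xi k] by linarith
qed

lemma lyap_iter_0: "lyap_iter xi 0 = lyap_A * (norm (z0 - zs))\<^sup>2"
  unfolding lyap_iter_def prev_def corr_def prev_grad_def prev_noise_def lyap_def by simp

lemma lyap_iter_step: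
  "lyap_iter xi (Suc k) + gain * (norm (noiseless xi k - zs))\<^sup>2
     \<le> (1 - \<gamma>) * lyap_iter xi k + \<tau> * norm (noise xi k) * norm (noiseless xi k - zs)
        + noise_C * (norm (noise xi k))\<^sup>2"
proof -
  define z where "z = iter xi k"
  define zp where "zp = prev xi k"
  define e where "e = noise xi k"
  define c where "c = (if k = 0 then 0 else \<tau>)"
  have g: "Fh z (xi k) = F z + e" unfolding e_def noise_def z_def by simp
  have zn: "iter xi (Suc k) = closest_point Z
      (z + \<gamma> *\<^sub>R (z - zp) - \<alpha> *\<^sub>R (F z + e) - (1 - \<gamma>) *\<^sub>R corr xi k - c *\<^sub>R e)"
    unfolding iter_Suc z_def[symmetric] zp_def[symmetric] g corr_def c_def tau_eq
    by (cases "k = 0") (simp_all add: prev_def prev_grad_def zp_def z_def algebra_simps)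
  have c: "0 \<le> c" "c \<le> \<tau>" unfolding c_def using tau_pos by auto
  have "norm (iter xi (Suc k) - noiseless xi k)
      \<le> dist (z + \<gamma> *\<^sub>R (z - zp) - \<alpha> *\<^sub>R (F z + e) - (1 - \<gamma>) *\<^sub>R corr xi k - c *\<^sub>R e)
             (z + \<gamma> *\<^sub>R (z - zp) - (\<alpha> + \<tau>) *\<^sub>R F z + \<tau> *\<^sub>R prev_grad xi k)"
    unfolding zn noiseless_def z_def[symmetric] zp_def[symmetric] dist_norm[symmetric]
    by (rule closest_point_lipschitz[OF Z_convex Z_closed Z_nonempty])
  also have "\<dots> = norm (- ((\<alpha> + c) *\<^sub>R e))"
  proof -
    have "(1 - \<gamma>) *\<^sub>R corr xi k = \<tau> *\<^sub>R (F z - prev_grad xi k)"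
      unfolding corr_def tau_eq z_def by (simp add: mult.commute)
    moreover have "k = 0 \<Longrightarrow> prev_grad xi k = F z"
      unfolding prev_grad_def z_def by simp
    ultimately show ?thesis
      unfolding dist_norm c_def by (cases "k = 0") (simp_all add: algebra_simps)
  qed
  also have "\<dots> \<le> (\<alpha> + \<tau>) * norm e"
    using c alpha_pos by (simp add: mult_right_mono)
  finally have zbar: "norm (iter xi (Suc k) - noiseless xi k) \<le> (\<alpha> + \<tau>) * norm e" .
  have "lyap_iter xi (Suc k) = lyap (iter xi (Suc k)) z (\<alpha> *\<^sub>R (F (iter xi (Suc k)) - F z - e)) e"
    unfolding lyap_iter_def corr_def prev_grad_def prev_def prev_noise_def
    by (simp add: z_def e_def noise_def algebra_simps)
  moreover have "lyap_iter xi k = lyap z zp (corr xi k) (prev_noise xi k)"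
    unfolding lyap_iter_def z_def zp_def ..
  moreover have "c * norm e * norm (noiseless xi k - zs) \<le> \<tau> * norm e * norm (noiseless xi k - zs)"
    using c by (intro mult_right_mono) auto
  moreover have "z \<in> Z" "zp \<in> Z" unfolding z_def zp_def by (rule iter_in_Z prev_in_Z)+
  moreover have "norm (corr xi k) \<le> \<alpha> * L * norm (z - zp) + \<alpha> * norm (prev_noise xi k)"
    unfolding z_def zp_def by (rule corr_bound)
  ultimately show ?thesis
    using lyap_step[OF _ _ zn _ c zbar] unfolding e_def by fastforce
qed

lemma iter_cong: "(\<And>i. i < j \<Longrightarrow> xi i = xi' i) \<Longrightarrow> iter xi j = iter xi' j"
proof (induction j rule: less_induct)
  case (less j)
  show ?case
  proof (cases j)
    case (Suc k)
    then have "iter xi k = iter xi' k" "k \<noteq> 0 \<Longrightarrow> iter xi (k - 1) = iter xi' (k - 1)"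
      "xi k = xi' k" "k \<noteq> 0 \<Longrightarrow> xi (k - 1) = xi' (k - 1)"
      using less by auto
    then show ?thesis
      unfolding Suc iter_Suc prev_def prev_grad_def by (cases "k = 0") auto
  qed simp
qed

lemma lyap_iter_cong: "(\<And>i. i < k \<Longrightarrow> xi i = xi' i) \<Longrightarrow> lyap_iter xi k = lyap_iter xi' k"
  and noiseless_cong: "(\<And>i. i < k \<Longrightarrow> xi i = xi' i) \<Longrightarrow> noiseless xi k = noiseless xi' k"
proof -
  assume h: "\<And>i. i < k \<Longrightarrow> xi i = xi' i"
  then have "iter xi k = iter xi' k" "k \<noteq> 0 \<Longrightarrow> iter xi (k - 1) = iter xi' (k - 1)"
    "k \<noteq> 0 \<Longrightarrow> xi (k - 1) = xi' (k - 1)"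
    by (auto intro: iter_cong)
  then show "lyap_iter xi k = lyap_iter xi' k" "noiseless xi k = noiseless xi' k"
    unfolding lyap_iter_def noiseless_def corr_def prev_grad_def prev_def prev_noise_def noise_def
    by (cases "k = 0"; simp)+
qed

end

locale stochastic_extra_momentum = extra_momentum_iteration Z F \<mu> L zs Fh z0
  for Z :: "'a::euclidean_space set" and F \<mu> L zs and Fh :: "'a \<Rightarrow> 's \<Rightarrow> 'a" and z0 +
  fixes M :: "'w measure" and S :: "'s measure" and \<xi> :: "nat \<Rightarrow> 'w \<Rightarrow> 's" and \<delta> \<sigma> :: real
  assumes prob_M: "prob_space M"
    and Fh_measurable: "(\<lambda>p. Fh (fst p) (snd p)) \<in> borel_measurable (borel \<Otimes>\<^sub>M S)"
    and xi_indep: "prob_space.indep_vars M (\<lambda>_. S) \<xi> UNIV"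
    and delta_nonneg: "0 \<le> \<delta>" and sigma_nonneg: "0 \<le> \<sigma>"
    and bias: "\<forall>j. \<forall>z\<in>Z. (\<integral>\<^sup>+ \<omega>. ennreal (norm (Fh z (\<xi> j \<omega>) - F z)) \<partial>M) \<le> ennreal \<delta>"
    and variance: "\<forall>j. \<forall>z\<in>Z. (\<integral>\<^sup>+ \<omega>. ennreal ((norm (Fh z (\<xi> j \<omega>) - F z))\<^sup>2) \<partial>M) \<le> ennreal (\<sigma>\<^sup>2)"
begin

definition "sample_distr i = distr M S (\<xi> i)"
definition "noise_N = noise_C * \<sigma>\<^sup>2 + \<tau>\<^sup>2 * \<delta>\<^sup>2 / (4 * gain)"

lemma xi_measurable: "\<xi> j \<in> measurable M S"
  using xi_indep unfolding prob_space.indep_vars_def2[OF prob_M] by simp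

lemma prob_space_sample_distr: "prob_space (sample_distr i)"
  unfolding sample_distr_def by (rule prob_space.prob_space_distr[OF prob_M xi_measurable])

lemma noise_N_nonneg: "0 \<le> noise_N"
  unfolding noise_N_def using noise_C_nonneg gain_pos by simp

lemma measurable_Fh_comp:
  "f \<in> borel_measurable N \<Longrightarrow> g \<in> measurable N S \<Longrightarrow> (\<lambda>x. Fh (f x) (g x)) \<in> borel_measurable N"
  using measurable_compose[OF measurable_Pair[of f N borel g S] Fh_measurable] by simp

text \<open>F is only Lipschitz on Z; composing it with the projection onto Z gives a continuous map.\<close>
lemma measurable_F_comp:
  assumes "f \<in> borel_measurable N" "\<And>x. f x \<in> Z"
  shows "(\<lambda>x. F (f x)) \<in> borel_measurable N"
proof -
  have "L-lipschitz_on Z F" unfolding lipschitz_on_def using lipschitz L_pos by (auto simp: dist_norm)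
  then have "continuous_on Z F" by (rule lipschitz_on_continuous_on)
  then have "continuous_on UNIV (\<lambda>z. F (closest_point Z z))"
    by (rule continuous_on_compose2[OF _ continuous_on_closest_point[OF Z_convex Z_closed Z_nonempty]])
       (auto simp: closest_point_in_set[OF Z_closed Z_nonempty])
  then have "(\<lambda>z. F (closest_point Z z)) \<in> borel_measurable borel"
    by (rule borel_measurable_continuous_onI)
  then have "(\<lambda>x. F (closest_point Z (f x))) \<in> borel_measurable N"
    by (rule measurable_compose[OF assms(1)])
  moreover have "closest_point Z (f x) = f x" for x
    using assms(2) by (rule closest_point_self)
  ultimately show ?thesis by simp
qed

lemma iter_measurable: "{..<j} \<subseteq> I \<Longrightarrow> (\<lambda>x. iter x j) \<in> borel_measurable (PiM I (\<lambda>_. S))"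
proof (induction j rule: less_induct)
  case (less j)
  have cp: "closest_point Z \<in> borel_measurable borel"
    by (rule borel_measurable_continuous_onI[OF continuous_on_closest_point[OF Z_convex Z_closed Z_nonempty]])
  show ?case
  proof (cases j)
    case (Suc k)
    have z: "(\<lambda>x. iter x k) \<in> borel_measurable (PiM I (\<lambda>_. S))"
      using less.IH[of k] less.prems Suc by (auto simp: subset_eq)
    have g: "(\<lambda>x. Fh (iter x k) (x k)) \<in> borel_measurable (PiM I (\<lambda>_. S))"
      using less.prems Suc by (intro measurable_Fh_comp[OF z] measurable_component_singleton) auto
    show ?thesis
    proof (cases "k = 0")
      case True
      then show ?thesis
        unfolding Suc iter_Suc prev_def using z g by (intro measurable_compose[OF _ cp]) simp
    next
      case False
      have zp: "(\<lambda>x. iter x (k - 1)) \<in> borel_measurable (PiM I (\<lambda>_. S))"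
        using less.IH[of "k - 1"] less.prems Suc by (auto simp: subset_eq)
      have gp: "(\<lambda>x. Fh (iter x (k - 1)) (x (k - 1))) \<in> borel_measurable (PiM I (\<lambda>_. S))"
        using less.prems Suc by (intro measurable_Fh_comp[OF zp] measurable_component_singleton) auto
      show ?thesis
        unfolding Suc iter_Suc prev_def prev_grad_def using False z g zp gp
        by (intro measurable_compose[OF _ cp]) simp
    qed
  qed simp
qed

lemma lyap_iter_measurable:
  assumes "{..<k} \<subseteq> I"
  shows "(\<lambda>x. lyap_iter x k) \<in> borel_measurable (PiM I (\<lambda>_. S))"
proof (cases "k = 0")
  case True
  then show ?thesis by (simp add: lyap_iter_0)
next
  case False
  have z: "(\<lambda>x. iter x k) \<in> borel_measurable (PiM I (\<lambda>_. S))"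
    and zp: "(\<lambda>x. iter x (k - 1)) \<in> borel_measurable (PiM I (\<lambda>_. S))"
    using assms by (auto intro!: iter_measurable)
  have gp: "(\<lambda>x. Fh (iter x (k - 1)) (x (k - 1))) \<in> borel_measurable (PiM I (\<lambda>_. S))"
    using assms False by (intro measurable_Fh_comp[OF zp] measurable_component_singleton) auto
  have "(\<lambda>x. F (iter x k)) \<in> borel_measurable (PiM I (\<lambda>_. S))"
    and "(\<lambda>x. F (iter x (k - 1))) \<in> borel_measurable (PiM I (\<lambda>_. S))"
    using z zp iter_in_Z by (auto intro: measurable_F_comp)
  then show ?thesis
    unfolding lyap_iter_def lyap_def corr_def prev_def prev_grad_def prev_noise_def noise_def
    using False z zp gp by simp
qed

lemma measurable_PiM_sample_distr:
  assumes "f \<in> borel_measurable (PiM I (\<lambda>_. S))"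
  shows "f \<in> borel_measurable (PiM I sample_distr)"
proof -
  have "sets (PiM I sample_distr) = sets (PiM I (\<lambda>_. S))"
    by (rule sets_PiM_cong) (simp_all add: sample_distr_def)
  then show ?thesis using assms measurable_cong_sets[of _ _ borel borel] by blast
qed

lemma nn_integral_lyap_iter_Suc_le:
  assumes x: "x \<in> space (PiM {..<k} sample_distr)"
  shows "(\<integral>\<^sup>+y. ennreal (lyap_iter (x(k := y)) (Suc k)) \<partial>sample_distr k)
    \<le> ennreal ((1 - \<gamma>) * lyap_iter x k + noise_N)"
proof -
  interpret prob_space M by (rule prob_M)
  define z where "z = iter x k"
  define nb where "nb = norm (noiseless x k - zs)"
  define u where "u \<omega> = norm (Fh z (\<xi> k \<omega>) - F z)" for \<omega>
  have xS: "x \<in> space (PiM {..<k} (\<lambda>_. S))"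
    using x by (simp add: space_PiM sample_distr_def)
  have "(\<lambda>x. lyap_iter x (Suc k)) \<in> borel_measurable (PiM (insert k {..<k}) (\<lambda>_. S))"
    by (rule lyap_iter_measurable) (auto simp: lessThan_Suc)
  moreover have "(\<lambda>y. x(k := y)) \<in> measurable S (PiM (insert k {..<k}) (\<lambda>_. S))"
    using xS by (intro measurable_component_update) auto
  ultimately have meas: "(\<lambda>y. lyap_iter (x(k := y)) (Suc k)) \<in> borel_measurable S"
    using measurable_compose by blast
  have "(\<lambda>\<omega>. Fh z (\<xi> k \<omega>)) \<in> borel_measurable M"
    by (rule measurable_Fh_comp[OF measurable_const xi_measurable]) simp
  then have u_meas: "u \<in> borel_measurable M"
    unfolding u_def by measurable
  have pointwise: "lyap_iter (x(k := \<xi> k \<omega>)) (Suc k) + gain * nb\<^sup>2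
      \<le> (1 - \<gamma>) * lyap_iter x k + \<tau> * nb * u \<omega> + noise_C * (u \<omega>)\<^sup>2" for \<omega>
  proof -
    have "lyap_iter (x(k := \<xi> k \<omega>)) k = lyap_iter x k" "noiseless (x(k := \<xi> k \<omega>)) k = noiseless x k"
      "iter (x(k := \<xi> k \<omega>)) k = z"
      unfolding z_def by (auto intro: lyap_iter_cong noiseless_cong iter_cong)
    then show ?thesis
      using lyap_iter_step[of "x(k := \<xi> k \<omega>)" k] unfolding noise_def nb_def u_def
      by (simp add: ac_simps)
  qed
  have "(\<integral>\<^sup>+y. ennreal (lyap_iter (x(k := y)) (Suc k)) \<partial>sample_distr k)
      = (\<integral>\<^sup>+\<omega>. ennreal (lyap_iter (x(k := \<xi> k \<omega>)) (Suc k)) \<partial>M)"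
    unfolding sample_distr_def using meas by (intro nn_integral_distr xi_measurable) auto
  also have "\<dots> \<le> ennreal ((1 - \<gamma>) * lyap_iter x k + \<tau> * nb * \<delta> + noise_C * \<sigma>\<^sup>2 - gain * nb\<^sup>2)"
  proof (rule nn_integral_le_by_moments[OF _ u_meas _ _ _ _ _ _ delta_nonneg _ pointwise])
    show "(\<lambda>\<omega>. lyap_iter (x(k := \<xi> k \<omega>)) (Suc k)) \<in> borel_measurable M"
      using measurable_compose[OF xi_measurable meas] by simp
    show "(\<integral>\<^sup>+\<omega>. ennreal (u \<omega>) \<partial>M) \<le> ennreal \<delta>"
      and "(\<integral>\<^sup>+\<omega>. ennreal ((u \<omega>)\<^sup>2) \<partial>M) \<le> ennreal (\<sigma>\<^sup>2)"
      unfolding u_def z_def using bias variance iter_in_Z by auto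
  qed (use lyap_iter_nonneg gamma_le tau_pos gain_pos noise_C_nonneg in \<open>auto simp: u_def nb_def\<close>)
  also have "\<dots> \<le> ennreal ((1 - \<gamma>) * lyap_iter x k + noise_N)"
  proof (rule ennreal_leI)
    have "nb * (\<tau> * \<delta>) \<le> gain * nb\<^sup>2 + (\<tau> * \<delta>)\<^sup>2 / (4 * gain)"
      using gain_pos by (rule mult_le_Young)
    then show "(1 - \<gamma>) * lyap_iter x k + \<tau> * nb * \<delta> + noise_C * \<sigma>\<^sup>2 - gain * nb\<^sup>2
        \<le> (1 - \<gamma>) * lyap_iter x k + noise_N"
      unfolding noise_N_def by (simp add: power_mult_distrib algebra_simps)
  qed
  finally show ?thesis .
qed

lemma nn_integral_lyap_iter_le:
  "(\<integral>\<^sup>+x. ennreal (lyap_iter x k) \<partial>PiM {..<k} sample_distr)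
    \<le> ennreal ((1 - \<gamma>) ^ k * (lyap_A * (norm (z0 - zs))\<^sup>2) + noise_N / \<gamma>)"
  using prob_space_sample_distr measurable_PiM_sample_distr[OF lyap_iter_measurable]
    lyap_iter_nonneg lyap_iter_0 nn_integral_lyap_iter_Suc_le gamma_pos gamma_le noise_N_nonneg
  by (intro nn_integral_PiM_lessThan_contraction[where V = "\<lambda>k x. lyap_iter x k"]) auto

lemma expected_lyap_iter_le:
  "(\<integral>\<^sup>+\<omega>. ennreal (lyap_iter (\<lambda>j. \<xi> j \<omega>) k) \<partial>M)
    \<le> ennreal ((1 - \<gamma>) ^ k * (lyap_A * (norm (z0 - zs))\<^sup>2) + noise_N / \<gamma>)"
proof -
  interpret prob_space M by (rule prob_M)
  show ?thesis
  proof (cases "k = 0")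
    case True
    then show ?thesis
      using gamma_pos noise_N_nonneg by (simp add: lyap_iter_0 emeasure_space_1 ennreal_leI)
  next
    case False
    have "(\<integral>\<^sup>+\<omega>. ennreal (lyap_iter (\<lambda>j. \<xi> j \<omega>) k) \<partial>M)
        = (\<integral>\<^sup>+\<omega>. ennreal (lyap_iter (\<lambda>j\<in>{..<k}. \<xi> j \<omega>) k) \<partial>M)"
      by (intro nn_integral_cong arg_cong[where f = ennreal] lyap_iter_cong) simp
    also have "\<dots> = (\<integral>\<^sup>+x. ennreal (lyap_iter x k) \<partial>PiM {..<k} sample_distr)"
      unfolding sample_distr_def using False lyap_iter_measurable[of k "{..<k}"]
      by (intro nn_integral_indep_vars_restrict indep_vars_subset[OF xi_indep]) auto
    also have "\<dots> \<le> ennreal ((1 - \<gamma>) ^ k * (lyap_A * (norm (z0 - zs))\<^sup>2) + noise_N / \<gamma>)"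
      by (rule nn_integral_lyap_iter_le)
    finally show ?thesis .
  qed
qed

lemma expected_sq_dist_le:
  "(\<integral>\<^sup>+\<omega>. ennreal ((norm (iter (\<lambda>j. \<xi> j \<omega>) k - zs))\<^sup>2) \<partial>M)
    \<le> ennreal (2 * (1 - \<gamma>) ^ k * (norm (z0 - zs))\<^sup>2
               + 128 * \<sigma>\<^sup>2 / (\<mu> * (8 * L + \<mu>)) + 4 * \<delta>\<^sup>2 / \<mu>\<^sup>2)"
proof -
  define A1 where "A1 = lyap_A - 1/8"
  define W0 where "W0 = (norm (z0 - zs))\<^sup>2"
  have A1: "3/8 < A1" using lyap_A_ge unfolding A1_def .
  have g: "0 \<le> 1 - \<gamma>" "0 < \<gamma>" using gamma_pos gamma_le by auto
  have meas: "(\<lambda>\<omega>. lyap_iter (\<lambda>j. \<xi> j \<omega>) k) \<in> borel_measurable M"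
    using measurable_compose[OF measurable_restrict[of UNIV \<xi> M "\<lambda>_. S", OF xi_measurable]
        lyap_iter_measurable[of k UNIV]] by (simp add: restrict_UNIV)
  have "(\<integral>\<^sup>+\<omega>. ennreal ((norm (iter (\<lambda>j. \<xi> j \<omega>) k - zs))\<^sup>2) \<partial>M)
      \<le> (\<integral>\<^sup>+\<omega>. ennreal (1 / A1) * ennreal (lyap_iter (\<lambda>j. \<xi> j \<omega>) k) \<partial>M)"
  proof (rule nn_integral_mono)
    fix \<omega>
    have "(norm (iter (\<lambda>j. \<xi> j \<omega>) k - zs))\<^sup>2 \<le> 1 / A1 * lyap_iter (\<lambda>j. \<xi> j \<omega>) k"
      using lyap_iter_ge[of "\<lambda>j. \<xi> j \<omega>" k] A1 unfolding A1_def by (simp add: field_simps)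
    then have "ennreal ((norm (iter (\<lambda>j. \<xi> j \<omega>) k - zs))\<^sup>2)
        \<le> ennreal (1 / A1 * lyap_iter (\<lambda>j. \<xi> j \<omega>) k)"
      by (rule ennreal_leI)
    also have "\<dots> = ennreal (1 / A1) * ennreal (lyap_iter (\<lambda>j. \<xi> j \<omega>) k)"
      by (rule ennreal_mult) (use A1 lyap_iter_nonneg in auto)
    finally show "ennreal ((norm (iter (\<lambda>j. \<xi> j \<omega>) k - zs))\<^sup>2)
        \<le> ennreal (1 / A1) * ennreal (lyap_iter (\<lambda>j. \<xi> j \<omega>) k)" .
  qed
  also have "\<dots> = ennreal (1 / A1) * (\<integral>\<^sup>+\<omega>. ennreal (lyap_iter (\<lambda>j. \<xi> j \<omega>) k) \<partial>M)"
    using meas by (simp add: nn_integral_cmult)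
  also have "\<dots> \<le> ennreal (1 / A1) * ennreal ((1 - \<gamma>) ^ k * (lyap_A * W0) + noise_N / \<gamma>)"
    using expected_lyap_iter_le unfolding W0_def by (rule mult_left_mono) simp
  also have "\<dots> = ennreal ((1 - \<gamma>) ^ k * lyap_A * W0 / A1 + noise_C / (\<gamma> * A1) * \<sigma>\<^sup>2
      + \<tau>\<^sup>2 / (4 * gain) / (\<gamma> * A1) * \<delta>\<^sup>2)"
  proof -
    have "0 \<le> (1 - \<gamma>) ^ k * (lyap_A * W0) + noise_N / \<gamma>"
      using g A1 noise_N_nonneg unfolding A1_def W0_def by simp
    moreover have "1 / A1 * ((1 - \<gamma>) ^ k * (lyap_A * W0) + noise_N / \<gamma>)
        = (1 - \<gamma>) ^ k * lyap_A * W0 / A1 + noise_C / (\<gamma> * A1) * \<sigma>\<^sup>2 + \<tau>\<^sup>2 / (4 * gain) / (\<gamma> * A1) * \<delta>\<^sup>2"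
      unfolding noise_N_def using g A1 by (simp add: field_simps)
    ultimately show ?thesis using A1 by (simp add: ennreal_mult[symmetric])
  qed
  also have "\<dots> \<le> ennreal (2 * (1 - \<gamma>) ^ k * W0 + 128 / (\<mu> * (8 * L + \<mu>)) * \<sigma>\<^sup>2 + 4 / \<mu>\<^sup>2 * \<delta>\<^sup>2)"
  proof (intro ennreal_leI add_mono mult_right_mono)
    have "lyap_A \<le> 2 * A1" using A1 unfolding A1_def by simp
    then have "lyap_A * ((1 - \<gamma>) ^ k * W0) \<le> (2 * A1) * ((1 - \<gamma>) ^ k * W0)"
      using g unfolding W0_def by (intro mult_right_mono) auto
    then have "(1 - \<gamma>) ^ k * lyap_A * W0 \<le> (2 * (1 - \<gamma>) ^ k * W0) * A1"
      by (simp add: ac_simps)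
    then show "(1 - \<gamma>) ^ k * lyap_A * W0 / A1 \<le> 2 * (1 - \<gamma>) ^ k * W0"
      using A1 by (simp add: pos_divide_le_eq)
  qed (use noise_C_div_le tau_sq_div_le in \<open>simp_all add: A1_def\<close>)
  finally show ?thesis unfolding W0_def by simp
qed

end

theorem proposition2:
  fixes Z :: "'a::euclidean_space set"
    and F :: "'a \<Rightarrow> 'a"
    and Fh :: "'a \<Rightarrow> 's \<Rightarrow> 'a"
    and M :: "'w measure" and S :: "'s measure"
    and \<xi> :: "nat \<Rightarrow> 'w \<Rightarrow> 's"
    and \<mu> L \<delta> \<sigma> :: real and zs z0 :: 'a
  assumes Z: "Z \<noteq> {}" "closed Z" "convex Z"
    and mu: "0 < \<mu>" "\<mu> \<le> L"
    and strong_mono: "\<forall>z\<in>Z. \<forall>z'\<in>Z. inner (F z - F z') (z - z') \<ge> \<mu> * (norm (z - z'))\<^sup>2"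
    and lipschitz: "\<forall>z\<in>Z. \<forall>z'\<in>Z. norm (F z - F z') \<le> L * norm (z - z')"
    and zs: "zs \<in> Z" "\<forall>z\<in>Z. inner (F zs) (z - zs) \<ge> 0"
    and P: "prob_space M"
    and Fh_meas: "(\<lambda>p. Fh (fst p) (snd p)) \<in> borel_measurable (borel \<Otimes>\<^sub>M S)"
    and xi_meas: "\<And>j. \<xi> j \<in> measurable M S"
    and xi_indep: "prob_space.indep_vars M (\<lambda>_. S) \<xi> UNIV"
    and dsig: "0 \<le> \<delta>" "0 \<le> \<sigma>"
    and bias: "\<forall>j. \<forall>z\<in>Z. (\<integral>\<^sup>+ \<omega>. ennreal (norm (Fh z (\<xi> j \<omega>) - F z)) \<partial>M) \<le> ennreal \<delta>"
    and var: "\<forall>j. \<forall>z\<in>Z. (\<integral>\<^sup>+ \<omega>. ennreal ((norm (Fh z (\<xi> j \<omega>) - F z))\<^sup>2) \<partial>M) \<le> ennreal (\<sigma>\<^sup>2)"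
    and z0: "z0 \<in> Z"
  shows "\<forall>k. (\<integral>\<^sup>+ \<omega>. ennreal ((norm (sem_iter Fh Z (1 / (4 * L))
                 (1 / (8 * (L / \<mu> + 1 / 8)))
                 ((1 / (4 * L)) / (1 + (1 / 8) / (L / \<mu>)))
                 z0 (\<lambda>j. \<xi> j \<omega>) k - zs))\<^sup>2) \<partial>M)
          \<le> ennreal (2 * (1 - 1 / (8 * (L / \<mu>) + 1)) ^ k * (norm (z0 - zs))\<^sup>2
                     + 128 * \<sigma>\<^sup>2 / (\<mu> * (8 * L + \<mu>)) + 4 * \<delta>\<^sup>2 / \<mu>\<^sup>2)"
proof -
  interpret stochastic_extra_momentum Z F \<mu> L zs Fh z0 M S \<xi> \<delta> \<sigma>
    unfolding stochastic_extra_momentum_def stochastic_extra_momentum_axioms_def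
      extra_momentum_iteration_def extra_momentum_iteration_axioms_def extra_momentum_def
    using Z mu strong_mono lipschitz zs P Fh_meas xi_indep dsig bias var z0 by blast
  show ?thesis
    unfolding step_sizes_closed_form iter_def[symmetric] using expected_sq_dist_le by blast
qed

end
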